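(* Let $N\ge 1$, $M\ge 1$, let $x_1,\dots,x_N\in\mathbb{R}^M$, $y_1,\dots,y_N\in\mathbb{R}$, and let $X_N\in\mathbb{R}^{N\times M}$ be the matrix with rows $x_n^\top$ and $Y_N=(y_1,\dots,y_N)^\top$. Assume $X_N^\top X_N$ is invertible, and let $\theta_N=(X_N^\top X_N)^{-1}X_N^\top Y_N$. Fix a test vector $x\in\mathbb{R}^M$ and $\sigma>0$. For each $y\in\mathbb{R}$ let $$\hat\theta(y)=\arg\min_{\theta\in\mathbb{R}^M}\Big[\sum_{n=1}^N (y_n-x_n^\top\theta)^2+(y-x^\top\theta)^2\Big]$$ (the genie). Put $P_N=\dfrac{(X_N^\top X_N)^{-1}}{1+x^\top (X_N^\top X_N)^{-1}x}$. Then: (i) $y-x^\top\hat\theta(y)=(1-x^\top P_N x)(y-x^\top\theta_N)$ for every $y$; (ii) the normalization factor $K=\int_{\mathbb{R}} p_{\hat\theta(y')}(y'\mid x)\,dy'$ equals $$K=\frac{1}{1-x^\top P_N x}=1+x^\top (X_N^\top X_N)^{-1}x,$$ so the min-max regret is $\Gamma=\log K=\log\big(1+x^\top(X_N^\top X_N)^{-1}x\big)$; (iii) the pNML distribution $q_{\mathrm{pNML}}(y\mid x)=p_{\hat\theta(y)}(y\mid x)/K$ is $$q_{\mathrm{pNML}}(y\mid x)=\frac{1-x^\top P_N x}{\sqrt{2\pi\sigma^2}}\exp\Big\{-\frac{(1-x^\top P_N x)^2}{2\sigma^2}(y-x^\top\theta_N)^2\Big\},$$ i.e. a Gaussian with mean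 $x^\top\theta_N$ and variance $\sigma^2K^2$.
   Context: The hypothesis class is the Gaussian linear model $p_\theta(y\mid x)=\frac{1}{\sqrt{2\pi\sigma^2}}\exp\{-\frac{1}{2\sigma^2}(y-x^\top\theta)^2\}$, $\theta\in\mathbb{R}^M$. The pNML (predictive normalized maximum likelihood) learner is $q_{\mathrm{pNML}}(y\mid x)=p_{\hat\theta(y)}(y\mid x)/\int p_{\hat\theta(y')}(y'\mid x)\,dy'$, where $\hat\theta(y)$ is the genie: the hypothesis maximizing the likelihood of the training set together with the test pair $(x,y)$. *)

theory Defs
  imports "HOL-Analysis.Analysis" "HOL-Probability.Probability"
begin

(* Training data: X :: real^'m^'n has rows X $ n = x_n (N = CARD('n), M = CARD('m)),
   Y :: real^'n the labels. *)

definition gauss_lik :: "real \<Rightarrow> real^'m \<Rightarrow> real^'m \<Rightarrow> real \<Rightarrow> real" where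
  "gauss_lik \<sigma> x \<theta> y = 1 / sqrt (2 * pi * \<sigma>\<^sup>2) * exp (- ((y - x \<bullet> \<theta>)\<^sup>2) / (2 * \<sigma>\<^sup>2))"

definition genie_loss :: "real^'m^'n::finite \<Rightarrow> real^'n \<Rightarrow> real^'m \<Rightarrow> real \<Rightarrow> real^'m \<Rightarrow> real" where
  "genie_loss X Y x y \<theta> = (\<Sum>n\<in>UNIV. (Y $ n - (X $ n) \<bullet> \<theta>)\<^sup>2) + (y - x \<bullet> \<theta>)\<^sup>2"

definition genie :: "real^'m^'n::finite \<Rightarrow> real^'n \<Rightarrow> real^'m \<Rightarrow> real \<Rightarrow> real^'m" where
  "genie X Y x y = (ARG_MIN (genie_loss X Y x y) \<theta>. True)"

definition ls_estimate :: "real^'m^'n::finite \<Rightarrow> real^'n \<Rightarrow> real^'m" where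
  "ls_estimate X Y = matrix_inv (transpose X ** X) *v (transpose X *v Y)"

definition P_mat :: "real^'m^'n::finite \<Rightarrow> real^'m \<Rightarrow> real^'m^'m" where
  "P_mat X x = (1 / (1 + x \<bullet> (matrix_inv (transpose X ** X) *v x))) *\<^sub>R matrix_inv (transpose X ** X)"

definition pnml_norm :: "real \<Rightarrow> real^'m^'n::finite \<Rightarrow> real^'n \<Rightarrow> real^'m \<Rightarrow> real" where
  "pnml_norm \<sigma> X Y x = (\<integral>y'. gauss_lik \<sigma> x (genie X Y x y') y' \<partial>lborel)"

definition pnml :: "real \<Rightarrow> real^'m^'n::finite \<Rightarrow> real^'n \<Rightarrow> real^'m \<Rightarrow> real \<Rightarrow> real" where
  "pnml \<sigma> X Y x y = gauss_lik \<sigma> x (genie X Y x y) y / pnml_norm \<sigma> X Y x"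

end

theory Submission imports Defs begin

text \<open>Adding the test point is a rank-one update of the normal equations, so the genie is the
least-squares estimate moved along \<open>(X\<^sup>T X)\<^sup>-\<^sup>1 x\<close>; its residual at the test point is the
least-squares residual shrunk by the factor \<open>K = 1 + x\<^sup>T (X\<^sup>T X)\<^sup>-\<^sup>1 x\<close>. The genie likelihood is then
a Gaussian in \<open>y\<close> stretched by \<open>K\<close>, whose integral is \<open>K\<close> itself.\<close>

lemma matrix_inv_right_left:
  fixes A :: "real^'n^'n"
  assumes "invertible A"
  shows "A *v (matrix_inv A *v v) = v" "matrix_inv A *v (A *v v) = v"
proof -
  have "A ** matrix_inv A = mat 1 \<and> matrix_inv A ** A = mat 1"
    using someI_ex[OF assms[unfolded invertible_def]] unfolding matrix_inv_def .
  then show "A *v (matrix_inv A *v v) = v" "matrix_inv A *v (A *v v) = v"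
    by (simp_all add: matrix_vector_mul_assoc)
qed

lemma inner_gram_inverse_nonneg:
  fixes X :: "real^'m^'n"
  assumes "invertible (transpose X ** X)"
  shows "0 \<le> x \<bullet> (matrix_inv (transpose X ** X) *v x)"
proof -
  define z where "z = matrix_inv (transpose X ** X) *v x"
  have "transpose X *v (X *v z) = (transpose X ** X) *v z"
    by (rule matrix_vector_mul_assoc)
  also have "\<dots> = x"
    unfolding z_def by (rule matrix_inv_right_left(1)[OF assms])
  finally have "x \<bullet> z = (X *v z) \<bullet> (X *v z)"
    by (metis transpose_matrix_vector dot_lmul_matrix)
  then show ?thesis unfolding z_def by simp
qed

lemma genie_loss_eq_norm:
  "genie_loss X Y x y \<theta> = (norm (Y - X *v \<theta>))\<^sup>2 + (y - x \<bullet> \<theta>)\<^sup>2"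
  unfolding genie_loss_def power2_norm_eq_inner
  by (simp add: inner_vec_def power2_eq_square matrix_vector_mult_def mult.commute)

text \<open>Pythagoras for the augmented least-squares problem, at a solution \<open>\<theta>\<^sub>0\<close> of its normal
equations.\<close>

lemma genie_loss_decomp:
  assumes normal_eq: "transpose X *v (Y - X *v \<theta>\<^sub>0) + (y - x \<bullet> \<theta>\<^sub>0) *\<^sub>R x = 0"
  shows "genie_loss X Y x y \<theta>
    = genie_loss X Y x y \<theta>\<^sub>0 + (norm (X *v (\<theta>\<^sub>0 - \<theta>)))\<^sup>2 + (x \<bullet> (\<theta>\<^sub>0 - \<theta>))\<^sup>2"
proof -
  define r where "r = Y - X *v \<theta>\<^sub>0"
  define d where "d = \<theta>\<^sub>0 - \<theta>"
  have cross: "r \<bullet> (X *v d) + (y - x \<bullet> \<theta>\<^sub>0) * (x \<bullet> d) = 0"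
    using arg_cong[OF normal_eq, of "\<lambda>v. v \<bullet> d"]
    by (simp add: r_def inner_add_left dot_lmul_matrix)
  have "Y - X *v \<theta> = r + X *v d" "y - x \<bullet> \<theta> = (y - x \<bullet> \<theta>\<^sub>0) + x \<bullet> d"
    by (simp_all add: r_def d_def matrix_vector_mult_diff_distrib inner_diff_right)
  then show ?thesis
    unfolding genie_loss_eq_norm d_def[symmetric] r_def[symmetric] power2_norm_eq_inner
    using cross by (simp add: inner_commute power2_eq_square algebra_simps)
qed

lemma genie_eqI:
  assumes "\<And>\<theta>. genie_loss X Y x y \<theta>\<^sub>0 \<le> genie_loss X Y x y \<theta>"
    and "\<And>\<theta>. genie_loss X Y x y \<theta> = genie_loss X Y x y \<theta>\<^sub>0 \<Longrightarrow> \<theta> = \<theta>\<^sub>0"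
  shows "genie X Y x y = \<theta>\<^sub>0"
proof -
  have "genie_loss X Y x y (genie X Y x y) = genie_loss X Y x y \<theta>\<^sub>0"
    unfolding genie_def by (rule arg_min_equality) (use assms(1) in auto)
  then show ?thesis by (rule assms(2))
qed

lemma genie_eq:
  fixes X :: "real^'m^'n" and Y :: "real^'n" and x :: "real^'m"
  assumes inv: "invertible (transpose X ** X)"
  defines "a \<equiv> x \<bullet> (matrix_inv (transpose X ** X) *v x)"
  defines "\<theta>N \<equiv> ls_estimate X Y"
  shows "genie X Y x y
    = \<theta>N + ((y - x \<bullet> \<theta>N) / (1 + a)) *\<^sub>R (matrix_inv (transpose X ** X) *v x)"
proof (rule genie_eqI)
  let ?A = "transpose X ** X"
  define c where "c = (y - x \<bullet> \<theta>N) / (1 + a)"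
  define \<theta>\<^sub>0 where "\<theta>\<^sub>0 = \<theta>N + c *\<^sub>R (matrix_inv ?A *v x)"
  have "0 \<le> a" unfolding a_def by (rule inner_gram_inverse_nonneg[OF inv])
  have residual: "y - x \<bullet> \<theta>\<^sub>0 = c"
    using \<open>0 \<le> a\<close> by (simp add: \<theta>\<^sub>0_def c_def a_def inner_add_right field_simps)
  have "?A *v \<theta>\<^sub>0 = transpose X *v Y + c *\<^sub>R x"
    by (simp add: \<theta>\<^sub>0_def \<theta>N_def ls_estimate_def matrix_vector_right_distrib
        matrix_vector_mult_scaleR matrix_inv_right_left(1)[OF inv])
  then have normal_eq: "transpose X *v (Y - X *v \<theta>\<^sub>0) + (y - x \<bullet> \<theta>\<^sub>0) *\<^sub>R x = 0"
    by (simp add: residual matrix_vector_mult_diff_distrib matrix_vector_mul_assoc)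
  show "genie_loss X Y x y \<theta>\<^sub>0 \<le> genie_loss X Y x y \<theta>" for \<theta>
    unfolding genie_loss_decomp[OF normal_eq, of \<theta>] by simp
  show "\<theta> = \<theta>\<^sub>0" if "genie_loss X Y x y \<theta> = genie_loss X Y x y \<theta>\<^sub>0" for \<theta>
  proof -
    have "X *v (\<theta>\<^sub>0 - \<theta>) = 0"
      using that unfolding genie_loss_decomp[OF normal_eq, of \<theta>]
      by (simp add: add_nonneg_eq_0_iff)
    then have "?A *v (\<theta>\<^sub>0 - \<theta>) = 0"
      by (simp add: matrix_vector_mul_assoc[symmetric])
    then show ?thesis
      using matrix_inv_right_left(2)[OF inv, of "\<theta>\<^sub>0 - \<theta>"] by simp
  qed
qed

lemma genie_residual:
  fixes X :: "real^'m^'n"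
  assumes "invertible (transpose X ** X)"
  shows "y - x \<bullet> genie X Y x y
    = (y - x \<bullet> ls_estimate X Y) / (1 + x \<bullet> (matrix_inv (transpose X ** X) *v x))"
  using inner_gram_inverse_nonneg[OF assms, of x]
  by (simp add: genie_eq[OF assms] inner_add_right field_simps)

lemma one_minus_inner_P_mat:
  fixes X :: "real^'m^'n"
  assumes "invertible (transpose X ** X)"
  shows "1 - x \<bullet> (P_mat X x *v x) = 1 / (1 + x \<bullet> (matrix_inv (transpose X ** X) *v x))"
  using inner_gram_inverse_nonneg[OF assms, of x]
  by (simp add: P_mat_def scaleR_matrix_vector_assoc[symmetric] field_simps)

lemma gauss_lik_eq_normal_density:
  "gauss_lik \<sigma> x \<theta> y = normal_density 0 \<sigma> (y - x \<bullet> \<theta>)"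
  by (simp add: gauss_lik_def normal_density_def)

lemma normal_density_divide:
  assumes "0 < K"
  shows "normal_density 0 \<sigma> ((y - \<mu>) / K) = K * normal_density \<mu> (\<sigma> * K) y"
proof -
  have "sqrt (2 * pi * (\<sigma> * K)\<^sup>2) = K * sqrt (2 * pi * \<sigma>\<^sup>2)"
    using assms by (simp add: power_mult_distrib real_sqrt_mult)
  then show ?thesis
    using assms by (simp add: normal_density_def power_divide power_mult_distrib)
qed

theorem mainTheorem1:
  fixes X :: "real^'m::finite^'n::finite" and Y :: "real^'n" and x :: "real^'m" and \<sigma> :: real
  assumes "invertible (transpose X ** X)" and "\<sigma> > 0"
  defines "\<theta>N \<equiv> ls_estimate X Y" and "P \<equiv> P_mat X x"
  shows "(\<forall>y. y - x \<bullet> genie X Y x y = (1 - x \<bullet> (P *v x)) * (y - x \<bullet> \<theta>N))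
    \<and> integrable lborel (\<lambda>y'. gauss_lik \<sigma> x (genie X Y x y') y')
    \<and> pnml_norm \<sigma> X Y x = 1 / (1 - x \<bullet> (P *v x))
    \<and> pnml_norm \<sigma> X Y x = 1 + x \<bullet> (matrix_inv (transpose X ** X) *v x)
    \<and> ln (pnml_norm \<sigma> X Y x) = ln (1 + x \<bullet> (matrix_inv (transpose X ** X) *v x))
    \<and> (\<forall>y. pnml \<sigma> X Y x y = (1 - x \<bullet> (P *v x)) / sqrt (2 * pi * \<sigma>\<^sup>2)
             * exp (- ((1 - x \<bullet> (P *v x))\<^sup>2 / (2 * \<sigma>\<^sup>2)) * (y - x \<bullet> \<theta>N)\<^sup>2))
    \<and> (\<forall>y. pnml \<sigma> X Y x y = normal_density (x \<bullet> \<theta>N) (\<sigma> * pnml_norm \<sigma> X Y x) y)"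
proof -
  define K where "K = 1 + x \<bullet> (matrix_inv (transpose X ** X) *v x)"
  have "0 < K"
    using inner_gram_inverse_nonneg[OF assms(1), of x] by (simp add: K_def)
  have P: "1 - x \<bullet> (P *v x) = 1 / K"
    unfolding P_def K_def by (rule one_minus_inner_P_mat[OF assms(1)])
  have lik: "gauss_lik \<sigma> x (genie X Y x y) y = normal_density 0 \<sigma> ((y - x \<bullet> \<theta>N) / K)" for y
    by (simp add: gauss_lik_eq_normal_density genie_residual[OF assms(1)] K_def \<theta>N_def)
  have lik_normal: "gauss_lik \<sigma> x (genie X Y x y) y = K * normal_density (x \<bullet> \<theta>N) (\<sigma> * K) y"
    for y unfolding lik normal_density_divide[OF \<open>0 < K\<close>] ..
  have norm: "pnml_norm \<sigma> X Y x = K"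
    using \<open>0 < K\<close> \<open>0 < \<sigma>\<close> by (simp add: pnml_norm_def lik_normal)
  have pnml: "pnml \<sigma> X Y x y = normal_density 0 \<sigma> ((y - x \<bullet> \<theta>N) / K) / K" for y
    by (simp add: pnml_def norm lik)
  show ?thesis
  proof (intro conjI allI)
    show "y - x \<bullet> genie X Y x y = (1 - x \<bullet> (P *v x)) * (y - x \<bullet> \<theta>N)" for y
      by (simp add: P genie_residual[OF assms(1)] K_def \<theta>N_def)
    show "integrable lborel (\<lambda>y'. gauss_lik \<sigma> x (genie X Y x y') y')"
      using \<open>0 < K\<close> \<open>0 < \<sigma>\<close> by (simp add: lik_normal)
    show "pnml \<sigma> X Y x y = (1 - x \<bullet> (P *v x)) / sqrt (2 * pi * \<sigma>\<^sup>2)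
        * exp (- ((1 - x \<bullet> (P *v x))\<^sup>2 / (2 * \<sigma>\<^sup>2)) * (y - x \<bullet> \<theta>N)\<^sup>2)" for y
      by (simp add: pnml P normal_density_def power_divide)
    show "pnml \<sigma> X Y x y = normal_density (x \<bullet> \<theta>N) (\<sigma> * pnml_norm \<sigma> X Y x) y" for y
      using \<open>0 < K\<close> by (simp add: pnml norm normal_density_divide)
  qed (simp_all add: norm P K_def)
qed

end
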